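(* Let $\mathcal{H}$ be a real Hilbert space endowed with a Lorentz cone $\mathcal{L}_{v}$ (for some $v\in\mathcal{H}$ with $\|v\|=1$). Then: (1) If $\dim(\mathcal{H})\geq3$, then $\mathcal{H}$ is not a Riesz space (and hence not a Banach lattice). (2) $\mathcal{H}$ is an $\upsilon$-quasi-lattice. (3) $\mathcal{H}$ is absolutely monotone. (4) $\mathcal{H}$ is a $\mu$-quasi-lattice (and its $\upsilon$- and $\mu$-quasi-lattice structures coincide). (5) For every $x\in\mathcal{H}$, $\|x\|=\|\lceil x\rceil\|$. Hence $\mathcal{H}$ is $1$-absolutely conormal. (6) $\mathcal{H}$ is $1$-absolutely Davies-Ng regular. (7) If $X$ and $Y$ are pre-ordered Banach spaces with closed cones, with $X$ approximately $1$-absolutely conormal and $Y$ absolutely monotone, then the operator norms of both $B(X,\mathcal{H})$ and $B(\mathcal{H},Y)$ are positively attained, i.e., $\|T\|=\sup\{\|Tx\|:x\geq0,\ \|x\|=1\}$ for $T\in B(X,\mathcal{H})_{+}$ or $T\in B(\mathcal{H},Y)_{+}$. In particular, if $\mathcal{H}_{1}$ is another real Hilbert space endowed with a Lorentz cone, then the operator norm of $B(\mathcal{H},\mathcal{H}_{1})$ is positively attained. (8) If $\alpha>0$ and $X$ and $Y$ are pre-ordered Banach spaces with closed cones, with $X$ approximately $\alpha$-absolutely conormal and $Y$ $\alpha$-absolutely normal, then both $B(X,\mathcal{H})$ and $B(\mathcal{H},Y)$ are $\alpha$-absolutely normal. In particular, if $\mathcal{H}_{1}$ is another real Hilbert space endowed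 with a Lorentz cone, then $B(\mathcal{H},\mathcal{H}_{1})$ is absolutely monotone.
   Context: A pre-ordered Banach space is a real Banach space $X$ with a cone $X_{+}$ ($X_+ + X_+\subseteq X_+$, $\lambda X_+\subseteq X_+$ for $\lambda\ge 0$); $x\ge y$ means $x-y\in X_+$. $B(X,Y)$ carries the operator norm and the cone $B(X,Y)_{+}=\{T: TX_{+}\subseteq Y_{+}\}$. For a real Hilbert space $\mathcal{H}$, a norm-one $v\in\mathcal{H}$ and $P$ the orthogonal projection onto $\{v\}^{\perp}$, the Lorentz cone is $\mathcal{L}_{v}=\{x\in\mathcal{H}:\langle v|x\rangle\geq\|Px\|\}$ (closed, proper, generating). For $\alpha>0$, a pre-ordered Banach space $X$ with closed cone is: $\alpha$-absolutely normal if $\pm x\le y$ implies $\|x\|\le\alpha\|y\|$ (absolutely monotone if $\alpha=1$); $\alpha$-absolutely conormal if for every $x$ there is $a\in X_{+}$ with $\pm x\le a$ and $\|a\|\le\alpha\|x\|$; approximately $\alpha$-absolutely conormal if for every $x$ and $\varepsilon>0$ there is $a\in X_+$ with $\pm x\le a$ and $\|a\|<\alpha\|x\|+\varepsilon$; $\alpha$-absolutely Davies-Ng regular if it is both $\alpha$-absolutely normal and approximately $\alpha$-absolutely conormal. For $x,y\in X$, let $\upsilon(\{x,y\})$ be the set of upper bounds of $\{x,y\}$, $\mu(\{x,y\})$ the set of minimal upper bounds, and $\sigma_{x,y}(z)=\|z-x\|+\|z-y\|$. $X$ (with closed cone) is an $\upsilon$-quasi-lattice (resp. $\mu$-quasi-lattice)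 if for all $x,y$ the set $\upsilon(\{x,y\})$ (resp. $\mu(\{x,y\})$) is non-empty and contains a unique minimizer of $\sigma_{x,y}$ on it, called the quasi-supremum $x\tilde{\vee}y$. The quasi-absolute value is $\lceil x\rceil:=(-x)\tilde{\vee}x$. The operator norm on $B(X,Y)$ is positively attained if $\|T\|=\sup\{\|Tx\|:x\in X_{+},\ \|x\|=1\}$ for all $T\in B(X,Y)_{+}$. *)

theory Defs
  imports "HOL-Analysis.Analysis"
begin

definition preorder_cone :: "'a::real_vector set \<Rightarrow> bool" where
  "preorder_cone C \<longleftrightarrow> 0 \<in> C \<and> (\<forall>x\<in>C. \<forall>y\<in>C. x + y \<in> C) \<and> (\<forall>x\<in>C. \<forall>c::real. c \<ge> 0 \<longrightarrow> c *\<^sub>R x \<in> C)"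

definition cle :: "'a::real_vector set \<Rightarrow> 'a \<Rightarrow> 'a \<Rightarrow> bool" where
  "cle C x y \<longleftrightarrow> y - x \<in> C"

text \<open>Lorentz cone: P x = x - <v|x> v is the orthogonal projection onto v^perp (norm v = 1).\<close>
definition lorentz :: "'a::real_inner \<Rightarrow> 'a set" where
  "lorentz v = {x. v \<bullet> x \<ge> norm (x - (v \<bullet> x) *\<^sub>R v)}"

definition ubs :: "'a::real_vector set \<Rightarrow> 'a \<Rightarrow> 'a \<Rightarrow> 'a set" where
  "ubs C x y = {z. cle C x z \<and> cle C y z}"

definition mubs :: "'a::real_vector set \<Rightarrow> 'a \<Rightarrow> 'a \<Rightarrow> 'a set" where
  "mubs C x y = {z \<in> ubs C x y. \<forall>w \<in> ubs C x y. cle C w z \<longrightarrow> w = z}"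

definition sigma :: "'a::real_normed_vector \<Rightarrow> 'a \<Rightarrow> 'a \<Rightarrow> real" where
  "sigma x y z = norm (z - x) + norm (z - y)"

definition is_qsup :: "'a::real_normed_vector set \<Rightarrow> 'a \<Rightarrow> 'a \<Rightarrow> 'a \<Rightarrow> bool" where
  "is_qsup S x y z \<longleftrightarrow> z \<in> S \<and> (\<forall>w\<in>S. sigma x y z \<le> sigma x y w)"

definition ups_quasi_lattice :: "'a::real_normed_vector set \<Rightarrow> bool" where
  "ups_quasi_lattice C \<longleftrightarrow> closed C \<and>
     (\<forall>x y. ubs C x y \<noteq> {} \<and> (\<exists>!z. is_qsup (ubs C x y) x y z))"

definition mu_quasi_lattice :: "'a::real_normed_vector set \<Rightarrow> bool" where
  "mu_quasi_lattice C \<longleftrightarrow> closed C \<and>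
     (\<forall>x y. mubs C x y \<noteq> {} \<and> (\<exists>!z. is_qsup (mubs C x y) x y z))"

definition qsup_ups :: "'a::real_normed_vector set \<Rightarrow> 'a \<Rightarrow> 'a \<Rightarrow> 'a" where
  "qsup_ups C x y = (THE z. is_qsup (ubs C x y) x y z)"

definition qsup_mu :: "'a::real_normed_vector set \<Rightarrow> 'a \<Rightarrow> 'a \<Rightarrow> 'a" where
  "qsup_mu C x y = (THE z. is_qsup (mubs C x y) x y z)"

definition qabs :: "'a::real_normed_vector set \<Rightarrow> 'a \<Rightarrow> 'a" where
  "qabs C x = qsup_ups C (- x) x"

definition abs_normal :: "'a::real_normed_vector set \<Rightarrow> real \<Rightarrow> bool" where
  "abs_normal C \<alpha> \<longleftrightarrow> (\<forall>x y. cle C (- x) y \<and> cle C x y \<longrightarrow> norm x \<le> \<alpha> * norm y)"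

abbreviation abs_monotone :: "'a::real_normed_vector set \<Rightarrow> bool" where
  "abs_monotone C \<equiv> abs_normal C 1"

definition abs_conormal :: "'a::real_normed_vector set \<Rightarrow> real \<Rightarrow> bool" where
  "abs_conormal C \<alpha> \<longleftrightarrow> (\<forall>x. \<exists>a\<in>C. cle C (- x) a \<and> cle C x a \<and> norm a \<le> \<alpha> * norm x)"

definition approx_abs_conormal :: "'a::real_normed_vector set \<Rightarrow> real \<Rightarrow> bool" where
  "approx_abs_conormal C \<alpha> \<longleftrightarrow>
     (\<forall>x. \<forall>\<epsilon>>0. \<exists>a\<in>C. cle C (- x) a \<and> cle C x a \<and> norm a < \<alpha> * norm x + \<epsilon>)"

definition abs_davies_ng :: "'a::real_normed_vector set \<Rightarrow> real \<Rightarrow> bool" where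
  "abs_davies_ng C \<alpha> \<longleftrightarrow> abs_normal C \<alpha> \<and> approx_abs_conormal C \<alpha>"

definition op_cone :: "'a::real_normed_vector set \<Rightarrow> 'b::real_normed_vector set \<Rightarrow> ('a \<Rightarrow>\<^sub>L 'b) set" where
  "op_cone CX CY = {T. \<forall>x\<in>CX. blinfun_apply T x \<in> CY}"

text \<open>Positively attained operator norm (sup of the empty set of norms taken as 0).\<close>
definition pos_attained :: "'a::real_normed_vector set \<Rightarrow> 'b::real_normed_vector set \<Rightarrow> bool" where
  "pos_attained CX CY \<longleftrightarrow> (\<forall>T \<in> op_cone CX CY.
     norm T = Sup (insert 0 {norm (blinfun_apply T x) | x. x \<in> CX \<and> norm x = 1}))"

definition riesz_space :: "'a::real_vector set \<Rightarrow> bool" where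
  "riesz_space C \<longleftrightarrow> preorder_cone C \<and> (\<forall>x. x \<in> C \<and> - x \<in> C \<longrightarrow> x = 0) \<and>
     (\<forall>x y. \<exists>s \<in> ubs C x y. \<forall>z \<in> ubs C x y. cle C s z)"

definition lat_sup :: "'a::real_vector set \<Rightarrow> 'a \<Rightarrow> 'a \<Rightarrow> 'a" where
  "lat_sup C x y = (THE s. s \<in> ubs C x y \<and> (\<forall>z \<in> ubs C x y. cle C s z))"

definition banach_lattice :: "'a::real_normed_vector set \<Rightarrow> bool" where
  "banach_lattice C \<longleftrightarrow> riesz_space C \<and>
     (\<forall>x y. cle C (lat_sup C x (- x)) (lat_sup C y (- y)) \<longrightarrow> norm x \<le> norm y)"

end

theory Submission
  imports Defs
begin

text \<open>
  The Lorentz cone L is self-dual, so if \<open>\<plusminus>x \<le> y\<close> then \<open>0 \<le> (y + x) \<bullet> (y - x) = \<parallel>y\<parallel>\<^sup>2 - \<parallel>x\<parallel>\<^sup>2\<close>: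
  L is absolutely monotone.
  Every upper bound u of \<open>-d\<close> and \<open>d\<close> satisfies \<open>v \<bullet> u \<ge> max \<bar>v \<bullet> d\<bar> \<parallel>Pd\<parallel>\<close>, and exactly one upper
  bound \<open>\<lceil>d\<rceil>\<close> attains this value; it is written down explicitly and has norm \<open>\<parallel>d\<parallel>\<close>. Hence \<open>\<lceil>d\<rceil>\<close> is
  a minimal upper bound, and a Cauchy-Schwarz estimate (or the triangle inequality, when \<open>\<plusminus>d\<close>
  lies in L) shows that \<open>\<sigma>\<close> exceeds its value at \<open>\<lceil>d\<rceil>\<close> by at least a multiple of the excess of
  \<open>v \<bullet> u\<close> over that minimum. So \<open>\<lceil>d\<rceil>\<close> is the quasi-supremum of \<open>-d, d\<close> over upper bounds and over
  minimal upper bounds alike, and an arbitrary pair is the translate of such a symmetric pair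
  by its midpoint.
\<close>

section \<open>Quasi-suprema in pre-ordered spaces\<close>

lemma preorder_cone_halve:
  assumes "preorder_cone C" "x \<in> C" "y \<in> C" "x + y = 2 *\<^sub>R z"
  shows "z \<in> C"
proof -
  have "(1/2::real) *\<^sub>R (x + y) \<in> C"
    using assms(1-3) unfolding preorder_cone_def by simp
  with assms(4) show ?thesis by simp
qed

lemma ubs_uminus_iff: "u \<in> ubs C (- d) d \<longleftrightarrow> u + d \<in> C \<and> u - d \<in> C"
  by (simp add: ubs_def cle_def)

lemma sigma_uminus: "sigma (- d) d u = norm (u + d) + norm (u - d)"
  by (simp add: sigma_def)

lemma ubs_translate: "ubs C (c + x) (c + y) = (+) c ` ubs C x y"
proof -
  have "z \<in> ubs C (c + x) (c + y) \<longleftrightarrow> z - c \<in> ubs C x y" for z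
    by (simp add: ubs_def cle_def algebra_simps)
  then show ?thesis
    by (force simp: image_iff)
qed

lemma mubs_translate: "mubs C (c + x) (c + y) = (+) c ` mubs C x y"
proof -
  have "cle C (c + w) (c + z) \<longleftrightarrow> cle C w z" for w z
    by (simp add: cle_def)
  then show ?thesis
    unfolding mubs_def ubs_translate by (auto simp: image_iff)
qed

lemma is_qsup_translate:
  "is_qsup ((+) c ` S) (c + x) (c + y) (c + z) \<longleftrightarrow> is_qsup S x y z"
  by (simp add: is_qsup_def sigma_def image_iff)

lemma is_qsup_of_symmetric:
  fixes B :: "'a::real_normed_vector \<Rightarrow> 'a \<Rightarrow> 'a set"
  assumes symmetric: "\<And>d u. is_qsup (B (- d) d) (- d) d u \<longleftrightarrow> u = f d"
    and translate: "\<And>c x y. B (c + x) (c + y) = (+) c ` B x y"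
  shows "is_qsup (B x y) x y z \<longleftrightarrow> z = (1/2) *\<^sub>R (x + y) + f ((1/2) *\<^sub>R (y - x))"
proof -
  define c d where "c = (1/2) *\<^sub>R (x + y)" and "d = (1/2) *\<^sub>R (y - x)"
  have "x = c + - d" "y = c + d"
    by (simp_all add: c_def d_def algebra_simps flip: scaleR_add_left)
  then have "is_qsup (B x y) x y z \<longleftrightarrow> is_qsup (B (- d) d) (- d) d (z - c)"
    using is_qsup_translate[of c "B (- d) d" "- d" d "z - c"] translate[of c "- d" d] by simp
  also have "\<dots> \<longleftrightarrow> z = c + f d"
    using symmetric by (auto simp: diff_eq_eq add.commute)
  finally show ?thesis
    by (simp add: c_def d_def)
qed

lemma is_qsup_subset_iff:
  assumes "\<And>z. is_qsup S x y z \<longleftrightarrow> z = z0" "z0 \<in> T" "T \<subseteq> S"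
  shows "is_qsup T x y z \<longleftrightarrow> z = z0"
  using assms unfolding is_qsup_def by (metis order_trans subsetD)


section \<open>The Lorentz cone\<close>

definition proj_perp :: "'a::real_inner \<Rightarrow> 'a \<Rightarrow> 'a" where
  "proj_perp v x = x - (v \<bullet> x) *\<^sub>R v"

lemma mem_lorentz_iff: "x \<in> lorentz v \<longleftrightarrow> norm (proj_perp v x) \<le> v \<bullet> x"
  by (simp add: lorentz_def proj_perp_def)

lemma proj_perp_add [simp]: "proj_perp v (x + y) = proj_perp v x + proj_perp v y"
  by (simp add: proj_perp_def inner_add_right algebra_simps)

lemma proj_perp_diff [simp]: "proj_perp v (x - y) = proj_perp v x - proj_perp v y"
  by (simp add: proj_perp_def inner_diff_right algebra_simps)

lemma proj_perp_scaleR [simp]: "proj_perp v (c *\<^sub>R x) = c *\<^sub>R proj_perp v x"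
  by (simp add: proj_perp_def algebra_simps)

lemma proj_perp_minus [simp]: "proj_perp v (- x) = - proj_perp v x"
  by (simp add: proj_perp_def)

lemma proj_perp_orthogonal: "v \<bullet> e = 0 \<Longrightarrow> proj_perp v e = e"
  by (simp add: proj_perp_def)

lemma proj_perp_decomp: "x = (v \<bullet> x) *\<^sub>R v + proj_perp v x"
  by (simp add: proj_perp_def)

lemma lorentz_add: "x \<in> lorentz v \<Longrightarrow> y \<in> lorentz v \<Longrightarrow> x + y \<in> lorentz v"
  unfolding mem_lorentz_iff
  using norm_triangle_ineq[of "proj_perp v x" "proj_perp v y"] by (simp add: inner_add_right)

lemma lorentz_scaleR: "x \<in> lorentz v \<Longrightarrow> 0 \<le> c \<Longrightarrow> c *\<^sub>R x \<in> lorentz v"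
  unfolding mem_lorentz_iff by (simp add: mult_left_mono)

lemma zero_mem_lorentz [simp]: "0 \<in> lorentz v"
  by (simp add: mem_lorentz_iff proj_perp_def)

lemma preorder_cone_lorentz: "preorder_cone (lorentz v)"
  unfolding preorder_cone_def using lorentz_add lorentz_scaleR by auto

lemma inner_nonneg_lorentz: "x \<in> lorentz v \<Longrightarrow> 0 \<le> v \<bullet> x"
  unfolding mem_lorentz_iff using norm_ge_zero order_trans by blast

lemma closed_lorentz: "closed (lorentz v)"
  unfolding lorentz_def by (intro closed_Collect_le continuous_intros)

locale unit_vector =
  fixes v :: "'a::real_inner"
  assumes norm_v: "norm v = 1"
begin

lemma inner_v_v [simp]: "v \<bullet> v = 1"
  using norm_v by (simp add: norm_eq_sqrt_inner)

lemma inner_v_proj_perp [simp]: "v \<bullet> proj_perp v x = 0"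
  by (simp add: proj_perp_def inner_diff_right)

lemma proj_perp_v [simp]: "proj_perp v v = 0"
  by (simp add: proj_perp_def)

lemma inner_decomp: "x \<bullet> y = (v \<bullet> x) * (v \<bullet> y) + proj_perp v x \<bullet> proj_perp v y"
proof -
  have "x \<bullet> y = ((v \<bullet> x) *\<^sub>R v + proj_perp v x) \<bullet> ((v \<bullet> y) *\<^sub>R v + proj_perp v y)"
    by (simp flip: proj_perp_decomp)
  also have "\<dots> = (v \<bullet> x) * (v \<bullet> y) + proj_perp v x \<bullet> proj_perp v y"
    by (simp add: inner_add_left inner_add_right algebra_simps inner_commute)
  finally show ?thesis .
qed

lemma norm_decomp: "(norm x)\<^sup>2 = (v \<bullet> x)\<^sup>2 + (norm (proj_perp v x))\<^sup>2"
  unfolding power2_norm_eq_inner using inner_decomp[of x x] by (simp add: power2_eq_square)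

lemma proj_perp_idem [simp]: "proj_perp v (proj_perp v x) = proj_perp v x"
  by (simp add: proj_perp_orthogonal)

lemma mem_lorentz_orthogonal_iff:
  "v \<bullet> w = 0 \<Longrightarrow> a *\<^sub>R v + w \<in> lorentz v \<longleftrightarrow> norm w \<le> a"
  by (simp add: mem_lorentz_iff proj_perp_orthogonal inner_add_right)

lemma inner_lorentz_nonneg:
  assumes "x \<in> lorentz v" "y \<in> lorentz v"
  shows "0 \<le> x \<bullet> y"
proof -
  have "norm (proj_perp v x) * norm (proj_perp v y) \<le> (v \<bullet> x) * (v \<bullet> y)"
    using assms by (intro mult_mono) (auto simp: mem_lorentz_iff inner_nonneg_lorentz)
  moreover have "- (norm (proj_perp v x) * norm (proj_perp v y)) \<le> proj_perp v x \<bullet> proj_perp v y"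
    using Cauchy_Schwarz_ineq2[of "proj_perp v x" "proj_perp v y"] by linarith
  ultimately show ?thesis
    by (simp add: inner_decomp[of x y])
qed

lemma abs_monotone_lorentz: "abs_monotone (lorentz v)"
  unfolding abs_normal_def cle_def
proof (intro allI impI, elim conjE)
  fix x y
  assume "y - - x \<in> lorentz v" "y - x \<in> lorentz v"
  then have "0 \<le> (y + x) \<bullet> (y - x)"
    by (intro inner_lorentz_nonneg) simp_all
  also have "(y + x) \<bullet> (y - x) = (norm y)\<^sup>2 - (norm x)\<^sup>2"
    by (simp add: power2_norm_eq_inner inner_add_left inner_diff_right inner_commute[of x y])
  finally have "(norm x)\<^sup>2 \<le> (norm y)\<^sup>2"
    by simp
  then show "norm x \<le> 1 * norm y"
    using power2_le_imp_le[OF _ norm_ge_zero] by simp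
qed

lemma norm_le_norm_add_lorentz:
  assumes "x \<in> lorentz v" "y \<in> lorentz v"
  shows "norm x \<le> norm (x + y)"
proof -
  have "x + (x + y) \<in> lorentz v"
    using assms by (intro lorentz_add)
  with assms have "cle (lorentz v) (- x) (x + y)" "cle (lorentz v) x (x + y)"
    by (simp_all add: cle_def add.commute)
  then show ?thesis
    using abs_monotone_lorentz unfolding abs_normal_def by simp
qed

end


section \<open>The quasi-absolute value\<close>

definition lorentz_height :: "'a::real_inner \<Rightarrow> 'a \<Rightarrow> real" where
  "lorentz_height v d = max \<bar>v \<bullet> d\<bar> (norm (proj_perp v d))"

text \<open>
  Its v-coordinate lorentz_height v d is the least v-coordinate of an upper
  bound of \<open>-d\<close> and \<open>d\<close> (lorentz_height_le_inner), and no other upper bound attains it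
  (lorentz_abs_unique). It equals \<open>\<plusminus>d\<close> if \<open>\<plusminus>d\<close> lies in the cone; for \<open>d = 0\<close> the quotient is \<open>0 / 0 = 0\<close>.
\<close>
definition lorentz_abs :: "'a::real_inner \<Rightarrow> 'a \<Rightarrow> 'a" where
  "lorentz_abs v d =
     lorentz_height v d *\<^sub>R v + ((v \<bullet> d) / lorentz_height v d) *\<^sub>R proj_perp v d"

lemma lorentz_height_uminus [simp]: "lorentz_height v (- d) = lorentz_height v d"
  by (simp add: lorentz_height_def)

lemma lorentz_abs_uminus [simp]: "lorentz_abs v (- d) = lorentz_abs v d"
  by (simp add: lorentz_abs_def)

definition lorentz_qsup :: "'a::real_inner \<Rightarrow> 'a \<Rightarrow> 'a \<Rightarrow> 'a" where
  "lorentz_qsup v x y = (1/2) *\<^sub>R (x + y) + lorentz_abs v ((1/2) *\<^sub>R (y - x))"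

context unit_vector
begin

lemma lorentz_height_le_inner:
  assumes "u + d \<in> lorentz v" "u - d \<in> lorentz v"
  shows "lorentz_height v d \<le> v \<bullet> u"
proof -
  let ?p = "proj_perp v u" and ?q = "proj_perp v d"
  have plus: "norm (?p + ?q) \<le> v \<bullet> u + v \<bullet> d" and minus: "norm (?p - ?q) \<le> v \<bullet> u - v \<bullet> d"
    using assms by (simp_all add: mem_lorentz_iff inner_add_right inner_diff_right)
  have "norm (2 *\<^sub>R ?q) \<le> norm (?p + ?q) + norm (?p - ?q)"
    using norm_triangle_ineq4[of "?p + ?q" "?p - ?q"] by (simp add: scaleR_2)
  with plus minus have "norm ?q \<le> v \<bullet> u"
    by simp
  moreover have "\<bar>v \<bullet> d\<bar> \<le> v \<bullet> u"
    using plus minus norm_ge_zero[of "?p + ?q"] norm_ge_zero[of "?p - ?q"] by linarith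
  ultimately show ?thesis
    by (simp add: lorentz_height_def)
qed

lemma inner_lorentz_abs [simp]: "v \<bullet> lorentz_abs v d = lorentz_height v d"
  by (simp add: lorentz_abs_def inner_add_right)

lemma proj_perp_lorentz_abs [simp]:
  "proj_perp v (lorentz_abs v d) = ((v \<bullet> d) / lorentz_height v d) *\<^sub>R proj_perp v d"
  by (simp add: lorentz_abs_def)

lemma lorentz_abs_add_mem: "lorentz_abs v d + d \<in> lorentz v"
proof -
  define m s r where "m = lorentz_height v d" and "s = v \<bullet> d" and "r = norm (proj_perp v d)"
  have bounds: "\<bar>s\<bar> \<le> m" "0 \<le> r" "r \<le> m"
    by (simp_all add: m_def s_def r_def lorentz_height_def)
  have "\<bar>s / m + 1\<bar> * r \<le> m + s"
  proof (cases "m = 0")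
    case False
    with bounds have "0 < m"
      by linarith
    with bounds have "0 \<le> s / m + 1"
      by (simp add: field_simps)
    with bounds have "\<bar>s / m + 1\<bar> * r \<le> (s / m + 1) * m"
      by (simp add: mult_left_mono)
    with \<open>0 < m\<close> show ?thesis
      by (simp add: field_simps)
  qed (use bounds in simp)
  moreover have "proj_perp v (lorentz_abs v d + d) = (s / m + 1) *\<^sub>R proj_perp v d"
    by (simp add: m_def s_def scaleR_add_left)
  ultimately show ?thesis
    by (simp add: mem_lorentz_iff inner_add_right m_def s_def r_def)
qed

lemma lorentz_abs_diff_mem: "lorentz_abs v d - d \<in> lorentz v"
  using lorentz_abs_add_mem[of "- d"] by simp

lemma lorentz_abs_unique:
  assumes plus: "u + d \<in> lorentz v" and minus: "u - d \<in> lorentz v"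
    and low: "v \<bullet> u \<le> lorentz_height v d"
  shows "u = lorentz_abs v d"
proof -
  define m s p q where "m = lorentz_height v d" and "s = v \<bullet> d"
    and "p = proj_perp v u" and "q = proj_perp v d"
  have bounds: "\<bar>s\<bar> \<le> m" "norm q \<le> m"
    by (simp_all add: m_def s_def q_def lorentz_height_def)
  have vu: "v \<bullet> u = m"
    using lorentz_height_le_inner[OF plus minus] low by (simp add: m_def)
  have x: "norm (p + q) \<le> m + s" and y: "norm (q - p) \<le> m - s"
    using plus minus vu
    by (simp_all add: mem_lorentz_iff inner_add_right inner_diff_right norm_minus_commute p_def q_def s_def)
  have parallel: "(m + s) *\<^sub>R (q - p) = (m - s) *\<^sub>R (p + q)"
  proof (cases "m = \<bar>s\<bar>")
    case True
    with x y show ?thesis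
      by (cases "0 \<le> s") auto
  next
    case False
    \<comment> \<open>the bounds on p + q and q - p force equality in the triangle inequality for 2 q\<close>
    then have "m = norm q"
      by (simp add: m_def s_def q_def lorentz_height_def max_def split: if_splits)
    then have two_m: "norm ((p + q) + (q - p)) = 2 * m"
      by (simp add: scaleR_2 [symmetric])
    then have tri: "norm ((p + q) + (q - p)) = norm (p + q) + norm (q - p)"
      using norm_triangle_ineq[of "p + q" "q - p"] x y by linarith
    then have "norm (p + q) *\<^sub>R (q - p) = norm (q - p) *\<^sub>R (p + q)"
      by (rule norm_triangle_eq [THEN iffD1])
    moreover have "norm (p + q) = m + s" "norm (q - p) = m - s"
      using x y two_m tri by linarith+
    ultimately show ?thesis
      by simp
  qed
  have "p = (s / m) *\<^sub>R q"
  proof (cases "m = 0")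
    case True
    then have "q = 0" "s = 0"
      using bounds by auto
    with x True show ?thesis
      by simp
  next
    case False
    from parallel have "(2 * m) *\<^sub>R p = (2 * s) *\<^sub>R q"
      by (simp add: algebra_simps scaleR_2 [symmetric])
    then have "(1 / (2 * m)) *\<^sub>R ((2 * m) *\<^sub>R p) = (s / m) *\<^sub>R q"
      by simp
    with False show ?thesis
      by simp
  qed
  then show ?thesis
    using proj_perp_decomp[of u v] vu by (simp add: lorentz_abs_def m_def s_def p_def q_def)
qed

lemma lorentz_abs_eq_self:
  assumes "d \<in> lorentz v"
  shows "lorentz_abs v d = d"
proof (rule lorentz_abs_unique [symmetric])
  show "d + d \<in> lorentz v"
    by (rule lorentz_add [OF assms assms])
  show "d - d \<in> lorentz v" "v \<bullet> d \<le> lorentz_height v d"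
    by (simp_all add: lorentz_height_def)
qed

lemma norm_lorentz_abs: "norm (lorentz_abs v d) = norm d"
proof -
  define m s r where "m = lorentz_height v d" and "s = v \<bullet> d" and "r = norm (proj_perp v d)"
  have "0 \<le> r" "r \<le> m"
    by (simp_all add: m_def r_def lorentz_height_def)
  have "m\<^sup>2 + (s / m * r)\<^sup>2 = s\<^sup>2 + r\<^sup>2"
  proof (cases "m = \<bar>s\<bar>")
    case True
    with \<open>0 \<le> r\<close> \<open>r \<le> m\<close> show ?thesis
      by (cases "s = 0") (auto simp: power_divide power_mult_distrib)
  next
    case False
    then have "m = r" "r \<noteq> 0"
      by (auto simp: m_def s_def r_def lorentz_height_def max_def split: if_splits)
    then show ?thesis
      by (simp add: power_divide power_mult_distrib)
  qed
  then have "(norm (lorentz_abs v d))\<^sup>2 = (norm d)\<^sup>2"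
    by (simp add: norm_decomp [of "lorentz_abs v d"] norm_decomp [of d] m_def s_def r_def
        power_divide power_mult_distrib)
  then show ?thesis
    by simp
qed

lemma lorentz_abs_mem_lorentz: "lorentz_abs v d \<in> lorentz v"
  by (rule preorder_cone_halve [OF preorder_cone_lorentz lorentz_abs_add_mem [of d] lorentz_abs_diff_mem [of d]])
    (simp add: scaleR_2)

lemma sigma_gap_of_mem_lorentz:
  assumes d: "d \<in> lorentz v" and plus: "u + d \<in> lorentz v" and minus: "u - d \<in> lorentz v"
  shows "v \<bullet> u - lorentz_height v d
    \<le> (norm (u + d) + norm (u - d)) - (norm (lorentz_abs v d + d) + norm (lorentz_abs v d - d))"
proof -
  have "lorentz_height v d = v \<bullet> d"
    using d inner_nonneg_lorentz[OF d] by (simp add: lorentz_height_def mem_lorentz_iff)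
  moreover have "norm (d + d) \<le> norm ((d + d) + (u - d))"
    using d minus by (intro norm_le_norm_add_lorentz lorentz_add)
  moreover have "v \<bullet> (u - d) \<le> norm (u - d)"
    using norm_cauchy_schwarz[of v "u - d"] norm_v by simp
  ultimately show ?thesis
    using lorentz_abs_eq_self[OF d] by (simp add: inner_diff_right add.commute)
qed

lemma sigma_gap_spacelike:
  assumes spacelike: "\<bar>v \<bullet> d\<bar> < norm (proj_perp v d)"
    and plus: "u + d \<in> lorentz v" and minus: "u - d \<in> lorentz v"
  shows "2 * (v \<bullet> u - lorentz_height v d)
    \<le> sqrt 2 * ((norm (u + d) + norm (u - d))
                  - (norm (lorentz_abs v d + d) + norm (lorentz_abs v d - d)))"
proof -
  define s r e where "s = v \<bullet> d" and "r = norm (proj_perp v d)"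
    and "e = (1 / r) *\<^sub>R proj_perp v d"
  have "0 < r" "\<bar>s\<bar> < r"
    using spacelike by (auto simp: s_def r_def)
  have height: "lorentz_height v d = r"
    using spacelike by (simp add: lorentz_height_def r_def)
  have e: "v \<bullet> e = 0" "proj_perp v e = e" "norm e = 1"
    using \<open>0 < r\<close> by (simp_all add: e_def r_def)
  have q_eq: "proj_perp v d = r *\<^sub>R e"
    using \<open>0 < r\<close> by (simp add: e_def)
  have abs_eq: "lorentz_abs v d = r *\<^sub>R v + s *\<^sub>R e"
    using \<open>0 < r\<close> by (simp add: lorentz_abs_def height q_eq s_def)
  have d_eq: "d = s *\<^sub>R v + r *\<^sub>R e"
    using proj_perp_decomp[of d v] by (simp add: s_def q_eq)
  have "(norm (v + e))\<^sup>2 = 2" "(norm (v - e))\<^sup>2 = 2"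
    using e by (simp_all add: norm_decomp [of "v + e"] norm_decomp [of "v - e"]
        inner_add_right inner_diff_right)
  then have norm_ve: "norm (v + e) = sqrt 2" "norm (v - e) = sqrt 2"
    by (metis abs_norm_cancel real_sqrt_abs)+
  have "lorentz_abs v d + d = (r *\<^sub>R v + s *\<^sub>R e) + (s *\<^sub>R v + r *\<^sub>R e)"
    "lorentz_abs v d - d = (r *\<^sub>R v + s *\<^sub>R e) - (s *\<^sub>R v + r *\<^sub>R e)"
    by (simp_all only: abs_eq flip: d_eq)
  then have "lorentz_abs v d + d = (r + s) *\<^sub>R (v + e)" "lorentz_abs v d - d = (r - s) *\<^sub>R (v - e)"
    by (simp_all add: algebra_simps)
  then have "norm (lorentz_abs v d + d) = (r + s) * sqrt 2" "norm (lorentz_abs v d - d) = (r - s) * sqrt 2"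
    using \<open>\<bar>s\<bar> < r\<close> norm_ve by simp_all
  then have abs_sigma: "norm (lorentz_abs v d + d) + norm (lorentz_abs v d - d) = 2 * r * sqrt 2"
    by (simp add: algebra_simps)
  \<comment> \<open>Cauchy-Schwarz against v + e and v - e, the directions of lorentz_abs v d \<plusminus> d\<close>
  have "(u + d) \<bullet> (v + e) + (u - d) \<bullet> (v - e) = 2 * (v \<bullet> u) + 2 * r"
    using e by (simp add: d_eq inner_add_left inner_add_right inner_diff_left inner_diff_right
        inner_commute[of u v] inner_commute[of e v] power2_norm_eq_inner [symmetric])
  moreover have "(u + d) \<bullet> (v + e) \<le> norm (u + d) * sqrt 2" "(u - d) \<bullet> (v - e) \<le> norm (u - d) * sqrt 2"
    using norm_cauchy_schwarz[of "u + d" "v + e"] norm_cauchy_schwarz[of "u - d" "v - e"] norm_ve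
    by simp_all
  ultimately show ?thesis
    using abs_sigma height by (simp add: algebra_simps)
qed

lemma sigma_lorentz_abs_gap:
  assumes "u \<in> ubs (lorentz v) (- d) d"
  obtains c where "0 < c"
    "c * (v \<bullet> u - lorentz_height v d) \<le> sigma (- d) d u - sigma (- d) d (lorentz_abs v d)"
proof -
  have plus: "u + d \<in> lorentz v" and minus: "u - d \<in> lorentz v"
    using assms by (simp_all add: ubs_uminus_iff)
  consider "d \<in> lorentz v" | "- d \<in> lorentz v" | "\<bar>v \<bullet> d\<bar> < norm (proj_perp v d)"
    by (force simp: mem_lorentz_iff)
  then show thesis
  proof cases
    case 1
    then show thesis
      using that[of 1] sigma_gap_of_mem_lorentz[OF 1 plus minus] by (simp add: sigma_uminus)
  next
    case 2
    then show thesis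
      using that[of 1] sigma_gap_of_mem_lorentz[of "- d" u] plus minus
      by (simp add: sigma_uminus algebra_simps)
  next
    case 3
    then show thesis
      using that[of "2 / sqrt 2"] sigma_gap_spacelike[OF 3 plus minus]
      by (simp add: sigma_uminus field_simps)
  qed
qed

lemma is_qsup_lorentz_abs_iff:
  "is_qsup (ubs (lorentz v) (- d) d) (- d) d u \<longleftrightarrow> u = lorentz_abs v d"
proof -
  have abs_ub: "lorentz_abs v d \<in> ubs (lorentz v) (- d) d"
    by (simp add: ubs_uminus_iff lorentz_abs_add_mem lorentz_abs_diff_mem)
  have height_le: "lorentz_height v d \<le> v \<bullet> w" if "w \<in> ubs (lorentz v) (- d) d" for w
    using that by (simp add: ubs_uminus_iff lorentz_height_le_inner)
  have minimal: "sigma (- d) d (lorentz_abs v d) \<le> sigma (- d) d w"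
    if w: "w \<in> ubs (lorentz v) (- d) d" for w
  proof -
    obtain c where "0 < c"
      "c * (v \<bullet> w - lorentz_height v d) \<le> sigma (- d) d w - sigma (- d) d (lorentz_abs v d)"
      using sigma_lorentz_abs_gap[OF w] .
    moreover have "0 \<le> c * (v \<bullet> w - lorentz_height v d)"
      using \<open>0 < c\<close> height_le[OF w] by simp
    ultimately show ?thesis
      by linarith
  qed
  have unique: "u = lorentz_abs v d"
    if u: "u \<in> ubs (lorentz v) (- d) d" and le: "sigma (- d) d u \<le> sigma (- d) d (lorentz_abs v d)"
    for u
  proof -
    obtain c where "0 < c"
      "c * (v \<bullet> u - lorentz_height v d) \<le> sigma (- d) d u - sigma (- d) d (lorentz_abs v d)"
      using sigma_lorentz_abs_gap[OF u] .
    with le have "v \<bullet> u \<le> lorentz_height v d"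
      by (smt (verit) mult_pos_pos)
    with u show ?thesis
      by (intro lorentz_abs_unique) (simp_all add: ubs_uminus_iff)
  qed
  show ?thesis
    using abs_ub minimal unique unfolding is_qsup_def by blast
qed

lemma lorentz_abs_mem_mubs: "lorentz_abs v d \<in> mubs (lorentz v) (- d) d"
  unfolding mubs_def
proof (intro CollectI conjI ballI impI)
  show ub: "lorentz_abs v d \<in> ubs (lorentz v) (- d) d"
    by (simp add: ubs_uminus_iff lorentz_abs_add_mem lorentz_abs_diff_mem)
  fix w
  assume "w \<in> ubs (lorentz v) (- d) d" "cle (lorentz v) w (lorentz_abs v d)"
  moreover from this have "v \<bullet> w \<le> lorentz_height v d"
    using inner_nonneg_lorentz[of "lorentz_abs v d - w" v] by (simp add: cle_def inner_diff_right)
  ultimately show "w = lorentz_abs v d"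
    by (intro lorentz_abs_unique) (simp_all add: ubs_uminus_iff)
qed

lemma is_qsup_ubs_lorentz_iff:
  "is_qsup (ubs (lorentz v) x y) x y z \<longleftrightarrow> z = lorentz_qsup v x y"
  unfolding lorentz_qsup_def
  by (rule is_qsup_of_symmetric) (simp_all add: is_qsup_lorentz_abs_iff ubs_translate)

lemma is_qsup_mubs_lorentz_iff:
  "is_qsup (mubs (lorentz v) x y) x y z \<longleftrightarrow> z = lorentz_qsup v x y"
  unfolding lorentz_qsup_def
proof (rule is_qsup_of_symmetric)
  fix d u
  show "is_qsup (mubs (lorentz v) (- d) d) (- d) d u \<longleftrightarrow> u = lorentz_abs v d"
    using is_qsup_lorentz_abs_iff lorentz_abs_mem_mubs
    by (rule is_qsup_subset_iff) (auto simp: mubs_def)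
qed (rule mubs_translate)

lemma ups_quasi_lattice_lorentz: "ups_quasi_lattice (lorentz v)"
  unfolding ups_quasi_lattice_def
  using closed_lorentz is_qsup_ubs_lorentz_iff by (metis empty_iff is_qsup_def)

lemma mu_quasi_lattice_lorentz: "mu_quasi_lattice (lorentz v)"
  unfolding mu_quasi_lattice_def
  using closed_lorentz is_qsup_mubs_lorentz_iff by (metis empty_iff is_qsup_def)

lemma qsup_ups_lorentz: "qsup_ups (lorentz v) x y = lorentz_qsup v x y"
  by (simp add: qsup_ups_def is_qsup_ubs_lorentz_iff)

lemma qsup_mu_lorentz: "qsup_mu (lorentz v) x y = lorentz_qsup v x y"
  by (simp add: qsup_mu_def is_qsup_mubs_lorentz_iff)

lemma qabs_lorentz: "qabs (lorentz v) x = lorentz_abs v x"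
  by (simp add: qabs_def qsup_ups_def is_qsup_lorentz_abs_iff)

lemma abs_conormal_lorentz: "abs_conormal (lorentz v) 1"
  unfolding abs_conormal_def cle_def
  using lorentz_abs_mem_lorentz lorentz_abs_add_mem lorentz_abs_diff_mem norm_lorentz_abs
  by (metis diff_minus_eq_add mult_1 order_refl)


section \<open>The Lorentz cone is not a lattice\<close>

lemma orthonormal_pair_perp:
  fixes S :: "'a set"
  assumes S: "independent S" "finite S" "card S = 3"
  obtains e1 e2 where "norm e1 = 1" "norm e2 = 1" "v \<bullet> e1 = 0" "v \<bullet> e2 = 0" "e1 \<bullet> e2 = 0"
proof -
  have "\<exists>a b. a \<noteq> 0 \<and> b \<noteq> 0 \<and> v \<bullet> a = 0 \<and> v \<bullet> b = 0 \<and> a \<bullet> b = 0"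
  proof (rule ccontr)
    assume none: "\<nexists>a b. a \<noteq> 0 \<and> b \<noteq> 0 \<and> v \<bullet> a = 0 \<and> v \<bullet> b = 0 \<and> a \<bullet> b = 0"
    have "\<exists>x\<in>S. proj_perp v x \<noteq> 0"
    proof (rule ccontr)
      assume "\<not> (\<exists>x\<in>S. proj_perp v x \<noteq> 0)"
      then have "S \<subseteq> span {v}"
        using proj_perp_decomp by (metis add.right_neutral span_base span_scale singletonI subsetI)
      then have "card S \<le> 1"
        using independent_span_bound[of "{v}" S] S by simp
      with S show False
        by simp
    qed
    then obtain x where "x \<in> S" and c_nz: "proj_perp v x \<noteq> 0" ..
    define c where "c = proj_perp v x"
    have "y \<in> span {v, c}" for y
    proof -
      define t where "t = (proj_perp v y \<bullet> c) / (c \<bullet> c)"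
      have "v \<bullet> (proj_perp v y - t *\<^sub>R c) = 0" "c \<bullet> (proj_perp v y - t *\<^sub>R c) = 0"
        using c_nz by (simp_all add: c_def t_def inner_diff_right inner_commute)
      with none c_nz have "proj_perp v y - t *\<^sub>R c = 0"
        unfolding c_def by (metis inner_v_proj_perp)
      then have "y = (v \<bullet> y) *\<^sub>R v + t *\<^sub>R c"
        using proj_perp_decomp[of y v] by simp
      then show ?thesis
        by (metis insertI1 insertI2 singletonI span_add span_base span_scale)
    qed
    then have "card S \<le> card {v, c}"
      using independent_span_bound[of "{v, c}" S] S by auto
    also have "\<dots> \<le> 2"
      by (simp add: card_insert_le_m1)
    finally show False
      using S by simp
  qed
  then obtain a b where "a \<noteq> 0" "b \<noteq> 0" "v \<bullet> a = 0" "v \<bullet> b = 0" "a \<bullet> b = 0"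
    by blast
  then show thesis
    by (intro that[of "a /\<^sub>R norm a" "b /\<^sub>R norm b"]) auto
qed

text \<open>
  A least upper bound of \<open>\<plusminus>3 e\<^sub>1\<close> would be the minimal upper bound \<open>3 v\<close>, but \<open>5 v + 4 e\<^sub>2\<close> is an upper
  bound that does not dominate \<open>3 v\<close>.
\<close>
lemma not_riesz_space_lorentz:
  assumes "\<exists>S :: 'a set. independent S \<and> finite S \<and> card S = 3"
  shows "\<not> riesz_space (lorentz v)"
proof
  assume "riesz_space (lorentz v)"
  obtain e1 e2 where e: "norm e1 = 1" "norm e2 = 1" "v \<bullet> e1 = 0" "v \<bullet> e2 = 0" "e1 \<bullet> e2 = 0"
    using assms orthonormal_pair_perp by metis
  define d where "d = 3 *\<^sub>R e1"
  obtain s where s_ub: "s \<in> ubs (lorentz v) (- d) d"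
    and s_least: "\<forall>z \<in> ubs (lorentz v) (- d) d. cle (lorentz v) s z"
    using \<open>riesz_space (lorentz v)\<close> unfolding riesz_space_def by blast
  have height: "lorentz_height v d = 3"
    using e by (simp add: d_def lorentz_height_def proj_perp_orthogonal)
  have "3 *\<^sub>R v + 3 *\<^sub>R e1 \<in> lorentz v" "3 *\<^sub>R v + (- 3) *\<^sub>R e1 \<in> lorentz v"
    using e by (simp_all only: mem_lorentz_orthogonal_iff inner_scaleR_right) simp_all
  then have ub3: "3 *\<^sub>R v \<in> ubs (lorentz v) (- d) d"
    by (simp add: ubs_uminus_iff d_def)
  then have "3 *\<^sub>R v = lorentz_abs v d"
    by (intro lorentz_abs_unique) (simp_all add: ubs_uminus_iff height)
  moreover have "s = lorentz_abs v d"
  proof (rule lorentz_abs_unique)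
    show "s + d \<in> lorentz v" "s - d \<in> lorentz v"
      using s_ub by (simp_all add: ubs_uminus_iff)
    have "3 *\<^sub>R v - s \<in> lorentz v"
      using s_least ub3 by (simp add: cle_def)
    then show "v \<bullet> s \<le> lorentz_height v d"
      using inner_nonneg_lorentz[of "3 *\<^sub>R v - s" v] by (simp add: height inner_diff_right)
  qed
  ultimately have s_eq: "s = 3 *\<^sub>R v"
    by simp
  have norm_5: "norm (4 *\<^sub>R e2 + c *\<^sub>R e1) = 5" if "c\<^sup>2 = 9" for c :: real
  proof -
    have "(norm (4 *\<^sub>R e2 + c *\<^sub>R e1))\<^sup>2 = 5\<^sup>2"
      using norm_add_Pythagorean[of "4 *\<^sub>R e2" "c *\<^sub>R e1"] e that
      by (simp add: orthogonal_def inner_commute power_mult_distrib)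
    then show ?thesis
      by (rule power2_eq_imp_eq) simp_all
  qed
  have "5 *\<^sub>R v + (4 *\<^sub>R e2 + 3 *\<^sub>R e1) \<in> lorentz v" "5 *\<^sub>R v + (4 *\<^sub>R e2 + (- 3) *\<^sub>R e1) \<in> lorentz v"
    using e norm_5[of 3] norm_5[of "- 3"]
    by (simp_all only: mem_lorentz_orthogonal_iff inner_add_right inner_scaleR_right) simp_all
  then have "5 *\<^sub>R v + 4 *\<^sub>R e2 \<in> ubs (lorentz v) (- d) d"
    by (simp add: ubs_uminus_iff d_def algebra_simps)
  with s_least s_eq have "(5 *\<^sub>R v + 4 *\<^sub>R e2) - 3 *\<^sub>R v \<in> lorentz v"
    by (simp add: cle_def)
  moreover have "(5 *\<^sub>R v + 4 *\<^sub>R e2) - 3 *\<^sub>R v = 2 *\<^sub>R v + 4 *\<^sub>R e2"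
    by (simp add: algebra_simps flip: scaleR_add_left)
  ultimately have "2 *\<^sub>R v + 4 *\<^sub>R e2 \<in> lorentz v"
    by simp
  with e show False
    by (simp add: mem_lorentz_orthogonal_iff)
qed

end


section \<open>Positive operators\<close>

lemma abs_conormal_imp_approx: "abs_conormal C \<alpha> \<Longrightarrow> approx_abs_conormal C \<alpha>"
  unfolding abs_conormal_def approx_abs_conormal_def
  by (meson le_less_trans less_add_same_cancel1)

lemma approx_abs_conormal_bound:
  assumes conormal: "approx_abs_conormal C \<alpha>" and "0 \<le> K"
    and bound: "\<And>a. a \<in> C \<Longrightarrow> cle C (- x) a \<Longrightarrow> cle C x a \<Longrightarrow> f x \<le> K * norm a"
  shows "f x \<le> K * \<alpha> * norm x"
proof (rule field_le_epsilon)
  fix e :: real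
  assume "0 < e"
  with \<open>0 \<le> K\<close> have "0 < e / (K + 1)"
    by simp
  with conormal obtain a where "a \<in> C" "cle C (- x) a" "cle C x a"
    and small: "norm a < \<alpha> * norm x + e / (K + 1)"
    unfolding approx_abs_conormal_def by blast
  then have "f x \<le> K * (\<alpha> * norm x + e / (K + 1))"
    using bound \<open>0 \<le> K\<close> by (meson less_imp_le mult_left_mono order_trans)
  also have "\<dots> \<le> K * \<alpha> * norm x + e"
    using \<open>0 \<le> K\<close> \<open>0 < e\<close> by (simp add: field_simps)
  finally show "f x \<le> K * \<alpha> * norm x + e" .
qed

lemma op_cone_cle:
  assumes "T \<in> op_cone CX CY" "cle CX x a"
  shows "cle CY (blinfun_apply T x) (blinfun_apply T a)"
  using assms by (simp add: op_cone_def cle_def flip: blinfun.diff_right)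

lemma pos_attained_of_conormal_monotone:
  assumes "preorder_cone CX" "approx_abs_conormal CX 1" "abs_monotone CY"
  shows "pos_attained CX CY"
  unfolding pos_attained_def
proof
  fix T
  assume T: "T \<in> op_cone CX CY"
  define A where "A = insert 0 {norm (blinfun_apply T x) | x. x \<in> CX \<and> norm x = 1}"
  have A_le: "t \<le> norm T" if "t \<in> A" for t
    using that norm_blinfun[of T] by (auto simp: A_def) (metis mult.right_neutral)
  then have bdd: "bdd_above A"
    by (rule bdd_aboveI)
  have "0 \<le> Sup A"
    by (rule cSup_upper[OF _ bdd]) (simp add: A_def)
  have on_cone: "norm (blinfun_apply T a) \<le> Sup A * norm a" if "a \<in> CX" for a
  proof (cases "a = 0")
    case False
    then have "(1 / norm a) *\<^sub>R a \<in> CX" "norm ((1 / norm a) *\<^sub>R a) = 1"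
      using \<open>preorder_cone CX\<close> that by (simp_all add: preorder_cone_def)
    then have "norm (blinfun_apply T ((1 / norm a) *\<^sub>R a)) \<le> Sup A"
      unfolding A_def by (intro cSup_upper[OF _ bdd[unfolded A_def]]) blast
    with False show ?thesis
      by (simp add: blinfun.scaleR_right field_simps)
  qed simp
  have "norm T \<le> Sup A"
  proof (rule norm_blinfun_bound[OF \<open>0 \<le> Sup A\<close>])
    fix x
    have "norm (blinfun_apply T x) \<le> Sup A * 1 * norm x"
    proof (rule approx_abs_conormal_bound[OF assms(2) \<open>0 \<le> Sup A\<close>])
      fix a
      assume "a \<in> CX" "cle CX (- x) a" "cle CX x a"
      then have "cle CY (- blinfun_apply T x) (blinfun_apply T a)"
        "cle CY (blinfun_apply T x) (blinfun_apply T a)"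
        using op_cone_cle[OF T] by (simp_all flip: blinfun.minus_right)
      then have "norm (blinfun_apply T x) \<le> norm (blinfun_apply T a)"
        using \<open>abs_monotone CY\<close> unfolding abs_normal_def by simp
      also have "\<dots> \<le> Sup A * norm a"
        by (rule on_cone[OF \<open>a \<in> CX\<close>])
      finally show "norm (blinfun_apply T x) \<le> Sup A * norm a" .
    qed
    then show "norm (blinfun_apply T x) \<le> Sup A * norm x"
      by simp
  qed
  moreover have "Sup A \<le> norm T"
    using A_le by (intro cSup_least) (auto simp: A_def)
  ultimately show "norm T = Sup A"
    by simp
qed

lemma op_cone_abs_cle:
  assumes "preorder_cone CY" "T + S \<in> op_cone CX CY" "T - S \<in> op_cone CX CY"
    and "a + x \<in> CX" "a - x \<in> CX"
  shows "blinfun_apply T a + blinfun_apply S x \<in> CY"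
proof (rule preorder_cone_halve[OF assms(1)])
  show "blinfun_apply (T + S) (a + x) \<in> CY" "blinfun_apply (T - S) (a - x) \<in> CY"
    using assms(2-5) by (simp_all add: op_cone_def)
  show "blinfun_apply (T + S) (a + x) + blinfun_apply (T - S) (a - x)
      = 2 *\<^sub>R (blinfun_apply T a + blinfun_apply S x)"
    by (simp add: blinfun.add_left blinfun.diff_left blinfun.add_right blinfun.diff_right
        algebra_simps scaleR_2)
qed

lemma abs_normal_op_cone:
  fixes CX :: "'a::real_normed_vector set" and CY :: "'b::real_normed_vector set"
  assumes "preorder_cone CY" "approx_abs_conormal CX \<beta>" "abs_normal CY \<gamma>"
    and "0 \<le> \<beta>" "0 \<le> \<gamma>"
  shows "abs_normal (op_cone CX CY) (\<gamma> * \<beta>)"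
  unfolding abs_normal_def
proof (intro allI impI, elim conjE)
  fix S T :: "'a \<Rightarrow>\<^sub>L 'b"
  assume "cle (op_cone CX CY) (- S) T" "cle (op_cone CX CY) S T"
  then have TS: "T + S \<in> op_cone CX CY" "T - S \<in> op_cone CX CY"
    by (simp_all add: cle_def)
  show "norm S \<le> \<gamma> * \<beta> * norm T"
  proof (rule norm_blinfun_bound)
    show "0 \<le> \<gamma> * \<beta> * norm T"
      using assms(4,5) by simp
    fix x
    have "norm (blinfun_apply S x) \<le> (\<gamma> * norm T) * \<beta> * norm x"
    proof (rule approx_abs_conormal_bound[OF assms(2)])
      show "0 \<le> \<gamma> * norm T"
        using assms(5) by simp
      fix a
      assume "a \<in> CX" "cle CX (- x) a" "cle CX x a"
      then have "blinfun_apply T a + blinfun_apply S x \<in> CY"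
        "blinfun_apply T a + blinfun_apply S (- x) \<in> CY"
        using op_cone_abs_cle[OF assms(1) TS] by (simp_all add: cle_def)
      then have "norm (blinfun_apply S x) \<le> \<gamma> * norm (blinfun_apply T a)"
        using assms(3) unfolding abs_normal_def cle_def by (simp add: blinfun.minus_right)
      also have "\<dots> \<le> \<gamma> * norm T * norm a"
        using assms(5) norm_blinfun[of T a] by (simp add: mult_left_mono mult.assoc)
      finally show "norm (blinfun_apply S x) \<le> \<gamma> * norm T * norm a" .
    qed
    then show "norm (blinfun_apply S x) \<le> \<gamma> * \<beta> * norm T * norm x"
      by (simp add: ac_simps)
  qed
qed


theorem theorem7p10:
  fixes v :: "'h::{real_inner, complete_space}"
    and w :: "'k::{real_inner, complete_space}"
  assumes "norm v = 1"
  shows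
    "((\<exists>S :: 'h set. independent S \<and> finite S \<and> card S = 3) \<longrightarrow>
        \<not> riesz_space (lorentz v) \<and> \<not> banach_lattice (lorentz v))
   \<and> ups_quasi_lattice (lorentz v)
   \<and> abs_monotone (lorentz v)
   \<and> mu_quasi_lattice (lorentz v)
   \<and> (\<forall>x y. qsup_ups (lorentz v) x y = qsup_mu (lorentz v) x y)
   \<and> (\<forall>x. norm x = norm (qabs (lorentz v) x))
   \<and> abs_conormal (lorentz v) 1
   \<and> abs_davies_ng (lorentz v) 1
   \<and> (\<forall>(CX :: 'x::banach set) (CY :: 'y::banach set).
        preorder_cone CX \<and> closed CX \<and> preorder_cone CY \<and> closed CY \<and>
        approx_abs_conormal CX 1 \<and> abs_monotone CY \<longrightarrow>
        pos_attained CX (lorentz v) \<and> pos_attained (lorentz v) CY)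
   \<and> (norm w = 1 \<longrightarrow> pos_attained (lorentz v) (lorentz w))
   \<and> (\<forall>(\<alpha>::real) (CX :: 'x::banach set) (CY :: 'y::banach set).
        \<alpha> > 0 \<and> preorder_cone CX \<and> closed CX \<and> preorder_cone CY \<and> closed CY \<and>
        approx_abs_conormal CX \<alpha> \<and> abs_normal CY \<alpha> \<longrightarrow>
        abs_normal (op_cone CX (lorentz v)) \<alpha> \<and> abs_normal (op_cone (lorentz v) CY) \<alpha>)
   \<and> (norm w = 1 \<longrightarrow> abs_monotone (op_cone (lorentz v) (lorentz w)))"
proof -
  interpret unit_vector v
    using assms by unfold_locales
  have approx_conormal: "approx_abs_conormal (lorentz v) 1"
    by (rule abs_conormal_imp_approx[OF abs_conormal_lorentz])
  have monotone_w: "abs_monotone (lorentz w)" if "norm w = 1"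
    using that by (simp add: unit_vector.abs_monotone_lorentz unit_vector_def)
  have operators_normal: "abs_normal (op_cone CX (lorentz v)) \<alpha>" "abs_normal (op_cone (lorentz v) CY) \<alpha>"
    if "0 < \<alpha>" "preorder_cone CY" "approx_abs_conormal CX \<alpha>" "abs_normal CY \<alpha>"
    for \<alpha> and CX :: "'x set" and CY :: "'y set"
    using that abs_normal_op_cone[of "lorentz v" CX \<alpha> 1] abs_normal_op_cone[of CY "lorentz v" 1 \<alpha>]
    by (simp_all add: preorder_cone_lorentz abs_monotone_lorentz approx_conormal)
  show ?thesis
    using not_riesz_space_lorentz monotone_w operators_normal
      abs_normal_op_cone[of "lorentz w" "lorentz v" 1 1]
    by (auto simp: banach_lattice_def ups_quasi_lattice_lorentz mu_quasi_lattice_lorentz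
        abs_monotone_lorentz qsup_ups_lorentz qsup_mu_lorentz qabs_lorentz norm_lorentz_abs
        abs_conormal_lorentz abs_davies_ng_def approx_conormal preorder_cone_lorentz
        pos_attained_of_conormal_monotone)
qed

end
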